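(* Let $k\ge 3$ be an integer and $F$ a field admitting a primitive $(k-1)$-th root of unity. Let $A,B$ be associative $F$-algebras and $\varphi:A\to B$ an $F$-linear map with $\varphi(P_k(A))\subseteq P_k(B)$. If $e,f\in P_k(A)$ satisfy $ef=fe=0$, then $\varphi(e)\varphi(f)=\varphi(f)\varphi(e)$. If moreover $\mathrm{char}(F)\nmid k$, then $\varphi(e)\varphi(f)=\varphi(f)\varphi(e)=0$.
   Context: For a ring $A$ and an integer $k\ge 2$, $P_k(A)=\{a\in A: a^k=a\}$ is the set of $k$-potents. *)

theory Defs
  imports Main "HOL.Vector_Spaces"
begin

text \<open>Associative (not necessarily unital) algebra over a field: a ring (class ring:
  associative multiplication, no unit required) with a vector space scalar action
  compatible with multiplication.\<close>
definition algebra_over :: "('f::field \<Rightarrow> 'a::ring \<Rightarrow> 'a) \<Rightarrow> bool" where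
  "algebra_over s \<longleftrightarrow> Vector_Spaces.vector_space s \<and>
     (\<forall>c x y. s c (x * y) = s c x * y \<and> s c (x * y) = x * s c y)"

text \<open>Positive powers in a possibly non-unital ring: rpow a n = a^(n+1).\<close>
primrec rpow :: "'a::ring \<Rightarrow> nat \<Rightarrow> 'a" where
  "rpow a 0 = a"
| "rpow a (Suc n) = a * rpow a n"

definition kpow :: "'a::ring \<Rightarrow> nat \<Rightarrow> 'a" where
  "kpow a k = rpow a (k - 1)"

definition potents :: "nat \<Rightarrow> 'a::ring set" where
  "potents k = {a. kpow a k = a}"

definition primitive_root_of_unity :: "nat \<Rightarrow> 'f::field \<Rightarrow> bool" where
  "primitive_root_of_unity n w \<longleftrightarrow> w ^ n = 1 \<and> (\<forall>j. 0 < j \<and> j < n \<longrightarrow> w ^ j \<noteq> 1)"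

end

theory Submission
  imports Defs "HOL-Computational_Algebra.Primes"
begin

text \<open>Put \<open>n = k - 1\<close>, \<open>a = \<phi> e\<close>, \<open>b = \<phi> f\<close>. For every \<open>n\<close>-th root of unity \<open>t\<close> the element
  \<open>e + t f\<close> is \<open>k\<close>-potent, hence so is \<open>a + t b\<close>. Expanding \<open>(a + t b)\<^sup>k = \<Sum>\<^sub>i t\<^sup>i C\<^sub>i\<close> by the
  degree \<open>i\<close> in \<open>b\<close> and filtering the identity \<open>\<Sum>\<^sub>i t\<^sup>i C\<^sub>i = a + t b\<close> with the powers of a
  primitive root \<open>w\<close> (the exponents \<open>i\<close> with \<open>n dvd n - 1 + i\<close> are \<open>1\<close> and \<open>k\<close>) gives
  \<open>C\<^sub>1 + b\<^sup>k = b\<close>, i.e. \<open>C\<^sub>1 = \<Sum>\<^sub>j a\<^sup>j b a\<^sup>n\<^sup>-\<^sup>j = 0\<close>. Then \<open>0 = a C\<^sub>1 - C\<^sub>1 a = a\<^sup>k b - b a\<^sup>k = ab - ba\<close>,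
  and once \<open>a\<close> and \<open>b\<close> commute, \<open>0 = a C\<^sub>1 = k a\<^sup>k b = k ab\<close>.\<close>

lemma rpow_mult_commute: "rpow a m * a = a * rpow (a::'a::ring) m"
  by (induction m) (simp_all add: mult.assoc)

lemma mult_rpow_eq_0: "(x::'a::ring) * f = 0 \<Longrightarrow> x * rpow f m = 0"
  by (induction m) (simp_all add: mult.assoc[symmetric])

lemma rpow_commute: "(a::'a::ring) * b = b * a \<Longrightarrow> b * rpow a m = rpow a m * b"
  by (induction m) (simp_all add: mult.assoc[symmetric], metis mult.assoc)

lemma potents_Suc_iff: "x \<in> potents (Suc n) \<longleftrightarrow> rpow x n = x"
  unfolding potents_def kpow_def by simp

text \<open>The part of \<open>(a + b)\<^sup>m\<^sup>+\<^sup>1\<close> of degree \<open>i\<close> in \<open>b\<close>: the sum of all words of length \<open>m + 1\<close> in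
  \<open>a\<close> and \<open>b\<close> with exactly \<open>i\<close> letters \<open>b\<close>.\<close>
fun rpow_coeff :: "'a::ring \<Rightarrow> 'a \<Rightarrow> nat \<Rightarrow> nat \<Rightarrow> 'a" where
  "rpow_coeff a b 0 i = (if i = 0 then a else if i = 1 then b else 0)"
| "rpow_coeff a b (Suc m) i =
     a * rpow_coeff a b m i + (if i = 0 then 0 else b * rpow_coeff a b m (i - 1))"

lemma rpow_coeff_eq_0: "Suc m < i \<Longrightarrow> rpow_coeff a b m i = 0"
  by (induction m arbitrary: i) auto

lemma rpow_coeff_0: "rpow_coeff a b m 0 = rpow a m"
  by (induction m) auto

lemma rpow_coeff_top: "rpow_coeff a b m (Suc m) = rpow b m"
  by (induction m) (auto simp: rpow_coeff_eq_0)

lemma rpow_coeff_1_commutator: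
  "a * rpow_coeff a b m 1 - rpow_coeff a b m 1 * a = rpow a m * b - b * rpow (a::'a::ring) m"
proof (induction m)
  case 0
  then show ?case by simp
next
  case (Suc m)
  have "a * rpow_coeff a b (Suc m) 1 - rpow_coeff a b (Suc m) 1 * a =
     a * (a * rpow_coeff a b m 1 - rpow_coeff a b m 1 * a) + a * b * rpow a m - b * (rpow a m * a)"
    by (simp add: rpow_coeff_0 algebra_simps)
  then show ?case
    unfolding Suc by (simp add: algebra_simps rpow_mult_commute)
qed

locale assoc_algebra =
  fixes scale :: "'f::field \<Rightarrow> 'a::ring \<Rightarrow> 'a"
  assumes algebra_over: "algebra_over scale"
begin

sublocale vector_space scale
  using algebra_over unfolding algebra_over_def by blast

lemma scale_mult_left: "scale c x * y = scale c (x * y)"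
  using algebra_over unfolding algebra_over_def by simp

lemma scale_mult_right: "x * scale c y = scale c (x * y)"
  using algebra_over unfolding algebra_over_def by metis

lemma rpow_add_scale_orthogonal:
  assumes "e * f = 0" and "f * e = 0"
  shows "rpow (e + scale c f) m = rpow e m + scale (c ^ Suc m) (rpow f m)"
proof (induction m)
  case 0
  then show ?case by simp
next
  case (Suc m)
  have "rpow (e + scale c f) (Suc m) = (e + scale c f) * (rpow e m + scale (c ^ Suc m) (rpow f m))"
    using Suc by simp
  also have "\<dots> = e * rpow e m + scale (c ^ Suc m) (e * rpow f m) + scale c (f * rpow e m)
      + scale c (scale (c ^ Suc m) (f * rpow f m))"
    by (simp add: algebra_simps scale_mult_left scale_mult_right)
  also have "\<dots> = rpow e (Suc m) + scale (c ^ Suc (Suc m)) (rpow f (Suc m))"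
    using assms by (simp add: mult_rpow_eq_0 mult.commute)
  finally show ?case .
qed

lemma orthogonal_potents_add_scale:
  assumes "e \<in> potents (Suc n)" and "f \<in> potents (Suc n)"
    and "e * f = 0" and "f * e = 0" and "c ^ Suc n = c"
  shows "e + scale c f \<in> potents (Suc n)"
  using assms by (simp add: potents_Suc_iff rpow_add_scale_orthogonal)

lemma rpow_add_scale_expansion:
  "rpow (a + scale t b) m = (\<Sum>i\<le>Suc m. scale (t ^ i) (rpow_coeff a b m i))"
proof (induction m)
  case 0
  then show ?case by (simp add: numeral_2_eq_2)
next
  case (Suc m)
  let ?c = "rpow_coeff a b m"
  have "rpow (a + scale t b) (Suc m) =
      a * (\<Sum>i\<le>Suc m. scale (t ^ i) (?c i)) + scale t b * (\<Sum>i\<le>Suc m. scale (t ^ i) (?c i))"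
    using Suc by (simp only: rpow.simps distrib_right)
  also have "\<dots> =
      (\<Sum>i\<le>Suc m. scale (t ^ i) (a * ?c i)) + (\<Sum>i\<le>Suc m. scale (t ^ Suc i) (b * ?c i))"
    by (simp only: sum_distrib_left scale_mult_left scale_mult_right scale_scale power_Suc2)
  also have "(\<Sum>i\<le>Suc m. scale (t ^ i) (a * ?c i)) = (\<Sum>i\<le>Suc (Suc m). scale (t ^ i) (a * ?c i))"
    by (simp add: rpow_coeff_eq_0)
  also have "(\<Sum>i\<le>Suc m. scale (t ^ Suc i) (b * ?c i)) =
      (\<Sum>i\<le>Suc (Suc m). if i = 0 then 0 else scale (t ^ i) (b * ?c (i - 1)))"
    by (subst sum.atMost_Suc_shift) simp
  finally show ?case
    by (simp add: sum.distrib[symmetric] scale_right_distrib cong: if_cong)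
      (intro sum.cong, auto)
qed

lemma rpow_coeff_1_commuting:
  assumes "a * b = b * a"
  shows "a * rpow_coeff a b m 1 = scale (of_nat (Suc m)) (rpow a m * b)"
proof (induction m)
  case 0
  then show ?case by simp
next
  case (Suc m)
  have "a * rpow_coeff a b (Suc m) 1 = a * (a * rpow_coeff a b m 1) + a * (b * rpow a m)"
    by (simp add: rpow_coeff_0 distrib_left)
  also have "\<dots> = scale (of_nat (Suc m)) (rpow a (Suc m) * b) + rpow a (Suc m) * b"
    unfolding Suc by (simp add: scale_mult_right mult.assoc rpow_commute[OF assms])
  also have "\<dots> = scale (of_nat (Suc (Suc m))) (rpow a (Suc m) * b)"
    by (metis add.commute scale_left_distrib scale_one of_nat_Suc)
  finally show ?case .
qed

end

lemma of_nat_order_primitive_root_neq_0: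
  assumes w: "primitive_root_of_unity n (w::'f::field)" and "n > 0"
  shows "of_nat n \<noteq> (0::'f)"
proof
  assume "of_nat n = (0::'f)"
  then have p: "prime CHAR('f)" and "CHAR('f) dvd n"
    using \<open>n > 0\<close> CHAR_pos_iff prime_CHAR_semidom of_nat_eq_0_iff_char_dvd by blast+
  then obtain m where nm: "n = CHAR('f) * m" by blast
  have "m > 0" and "m < n"
    using nm \<open>n > 0\<close> prime_gt_1_nat[OF p] by auto
  have "(w ^ m + (-1)) ^ CHAR('f) = (w ^ m) ^ CHAR('f) + (-1) ^ CHAR('f)"
    by (rule freshmans_dream[OF p refl])
  also have "(w ^ m) ^ CHAR('f) = 1"
    using w nm unfolding primitive_root_of_unity_def by (simp add: power_mult[symmetric] mult.commute)
  also have "(-1::'f) ^ CHAR('f) = - 1"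
    using minus_power_prime_CHAR[OF refl p] by simp
  finally have "w ^ m = 1" by simp
  then show False
    using w \<open>m > 0\<close> \<open>m < n\<close> unfolding primitive_root_of_unity_def by blast
qed

lemma sum_primitive_root_powers:
  assumes w: "primitive_root_of_unity n (w::'f::field)" and "n > 0"
  shows "(\<Sum>j<n. w ^ (j * m)) = (if n dvd m then of_nat n else 0)"
proof -
  have wn: "w ^ n = 1" using w unfolding primitive_root_of_unity_def by blast
  have sum_eq: "(\<Sum>j<n. w ^ (j * m)) = (\<Sum>j<n. (w ^ m) ^ j)"
    by (simp only: power_mult[symmetric] mult.commute)
  show ?thesis
  proof (cases "n dvd m")
    case True
    then have "w ^ m = 1" by (auto simp: power_mult wn)
    then show ?thesis using sum_eq True by simp
  next
    case False
    have "w ^ m = (w ^ n) ^ (m div n) * w ^ (m mod n)"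
      by (simp only: power_mult[symmetric] power_add[symmetric] mult_div_mod_eq)
    moreover have "0 < m mod n" "m mod n < n"
      using False \<open>n > 0\<close> by (auto simp: mod_eq_0_iff_dvd[symmetric] intro: Nat.gr0I)
    ultimately have "w ^ m \<noteq> 1"
      using w wn unfolding primitive_root_of_unity_def by simp
    moreover have "(w ^ m) ^ n = 1"
      by (simp add: power_mult[symmetric] mult.commute[of m] power_mult wn)
    ultimately show ?thesis using sum_eq False by (simp add: sum_gp_strict)
  qed
qed

lemma primitive_root_power_Suc:
  "primitive_root_of_unity n w \<Longrightarrow> (w ^ j) ^ Suc n = w ^ j"
  unfolding primitive_root_of_unity_def
  by (simp add: power_mult[symmetric] mult.commute[of j] power_mult)

context vector_space
begin

lemma root_of_unity_filter:
  assumes w: "primitive_root_of_unity n w" and "n > 0"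
  shows "(\<Sum>j<n. scale (w ^ (j * r)) (\<Sum>i\<le>N. scale ((w ^ j) ^ i) (C i)))
    = scale (of_nat n) (\<Sum>i | i \<le> N \<and> n dvd r + i. C i)"
proof -
  have "(\<Sum>j<n. scale (w ^ (j * r)) (\<Sum>i\<le>N. scale ((w ^ j) ^ i) (C i)))
      = (\<Sum>j<n. \<Sum>i\<le>N. scale (w ^ (j * (r + i))) (C i))"
    by (simp add: scale_sum_right power_mult[symmetric] power_add[symmetric]
        distrib_left mult.commute[of _ j])
  also have "\<dots> = (\<Sum>i\<le>N. scale (\<Sum>j<n. w ^ (j * (r + i))) (C i))"
    by (subst sum.swap) (simp add: scale_sum_left)
  also have "\<dots> = (\<Sum>i\<le>N. if n dvd r + i then scale (of_nat n) (C i) else 0)"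
    using sum_primitive_root_powers[OF assms] by (intro sum.cong) auto
  also have "\<dots> = scale (of_nat n) (\<Sum>i | i \<le> N \<and> n dvd r + i. C i)"
    by (simp add: sum.inter_filter[symmetric] scale_sum_right atMost_def conj_commute)
  finally show ?thesis .
qed

lemma root_of_unity_coeff_filter:
  assumes w: "primitive_root_of_unity n w" and "n > 0"
    and eq: "\<And>j. (\<Sum>i\<le>N. scale ((w ^ j) ^ i) (C i)) = (\<Sum>i\<le>N. scale ((w ^ j) ^ i) (D i))"
  shows "(\<Sum>i | i \<le> N \<and> n dvd r + i. C i) = (\<Sum>i | i \<le> N \<and> n dvd r + i. D i)"
  using root_of_unity_filter[OF assms(1,2), where r=r and N=N and C=C]
    root_of_unity_filter[OF assms(1,2), where r=r and N=N and C=D]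
    of_nat_order_primitive_root_neq_0[OF assms(1,2)]
  by (simp add: eq)

end

lemma dvd_pred_add_iff:
  assumes "(n::nat) \<ge> 2" and "i \<le> Suc n"
  shows "n dvd n - 1 + i \<longleftrightarrow> i = 1 \<or> i = Suc n"
proof (cases i)
  case 0
  then show ?thesis using assms nat_dvd_not_less[of "n - 1" n] by auto
next
  case (Suc j)
  then have "n dvd n - 1 + i \<longleftrightarrow> n dvd j"
    using assms by (simp add: add.commute)
  also have "\<dots> \<longleftrightarrow> j = 0 \<or> j = n"
  proof
    assume "n dvd j"
    then obtain q where "j = n * q" by blast
    moreover have "j \<le> n" using Suc assms by simp
    ultimately show "j = 0 \<or> j = n"
      using assms by (cases q) (auto simp: le_Suc_eq)
  qed auto
  finally show ?thesis using Suc by auto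
qed

context assoc_algebra
begin

lemma rpow_coeff_1_eq_0:
  assumes w: "primitive_root_of_unity n w" and "n \<ge> 2" and "rpow b n = b"
    and potent: "\<And>j. rpow (a + scale (w ^ j) b) n = a + scale (w ^ j) b"
  shows "rpow_coeff a b n 1 = 0"
proof -
  have "(\<Sum>i\<le>Suc n. scale ((w ^ j) ^ i) (rpow_coeff a b n i))
      = (\<Sum>i\<le>Suc n. scale ((w ^ j) ^ i) (rpow_coeff a b 0 i))" for j
  proof -
    have "(\<Sum>i\<le>Suc n. scale ((w ^ j) ^ i) (rpow_coeff a b 0 i))
        = (\<Sum>i\<le>Suc 0. scale ((w ^ j) ^ i) (rpow_coeff a b 0 i))"
      by (rule sum.mono_neutral_right) (auto simp: rpow_coeff_eq_0)
    then show ?thesis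
      using potent[of j] rpow_add_scale_expansion[of a "w ^ j" b] by simp
  qed
  then have "(\<Sum>i | i \<le> Suc n \<and> n dvd n - 1 + i. rpow_coeff a b n i)
      = (\<Sum>i | i \<le> Suc n \<and> n dvd n - 1 + i. rpow_coeff a b 0 i)"
    using w \<open>n \<ge> 2\<close> by (intro root_of_unity_coeff_filter) auto
  moreover have "{i. i \<le> Suc n \<and> n dvd n - 1 + i} = {1, Suc n}"
    using dvd_pred_add_iff[OF \<open>n \<ge> 2\<close>] by auto
  ultimately show ?thesis
    using \<open>n \<ge> 2\<close> \<open>rpow b n = b\<close> by (simp add: rpow_coeff_top)
qed

end

theorem lemma7p2:
  fixes k :: nat
    and sA :: "'f::field \<Rightarrow> 'a::ring \<Rightarrow> 'a"
    and sB :: "'f \<Rightarrow> 'b::ring \<Rightarrow> 'b"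
    and \<phi> :: "'a \<Rightarrow> 'b"
    and e f :: 'a
  assumes "k \<ge> 3"
    and "\<exists>w::'f. primitive_root_of_unity (k - 1) w"
    and "algebra_over sA" and "algebra_over sB"
    and "Vector_Spaces.linear sA sB \<phi>"
    and "\<phi> ` potents k \<subseteq> potents k"
    and "e \<in> potents k" and "f \<in> potents k"
    and "e * f = 0" and "f * e = 0"
  shows "\<phi> e * \<phi> f = \<phi> f * \<phi> e
    \<and> (\<not> CHAR('f) dvd k \<longrightarrow> \<phi> e * \<phi> f = 0 \<and> \<phi> f * \<phi> e = 0)"
proof -
  interpret A: assoc_algebra sA by unfold_locales fact
  interpret B: assoc_algebra sB by unfold_locales fact
  interpret L: linear sA sB \<phi> by fact
  define n where "n = k - 1"
  have k: "k = Suc n" and "n \<ge> 2" using \<open>k \<ge> 3\<close> unfolding n_def by auto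
  obtain w :: 'f where w: "primitive_root_of_unity n w" using assms(2) unfolding n_def by blast
  have pot_a: "rpow (\<phi> e) n = \<phi> e" and pot_b: "rpow (\<phi> f) n = \<phi> f"
    using assms(6-8) unfolding k potents_Suc_iff[symmetric] by blast+
  have "rpow (\<phi> e + sB (w ^ j) (\<phi> f)) n = \<phi> e + sB (w ^ j) (\<phi> f)" for j
  proof -
    have "e + sA (w ^ j) f \<in> potents k"
      using A.orthogonal_potents_add_scale assms(7-10) primitive_root_power_Suc[OF w]
      unfolding k by blast
    then show ?thesis
      using assms(6) unfolding k potents_Suc_iff[symmetric] by (auto simp: L.add L.scale)
  qed
  then have C1: "rpow_coeff (\<phi> e) (\<phi> f) n 1 = 0"
    using B.rpow_coeff_1_eq_0[OF w \<open>n \<ge> 2\<close> pot_b] by blast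
  then have comm: "\<phi> e * \<phi> f = \<phi> f * \<phi> e"
    using rpow_coeff_1_commutator[of "\<phi> e" "\<phi> f" n] pot_a by simp
  moreover have "\<phi> e * \<phi> f = 0" if "\<not> CHAR('f) dvd k"
  proof -
    have "of_nat k \<noteq> (0::'f)" using that of_nat_eq_0_iff_char_dvd by blast
    then show ?thesis
      using B.rpow_coeff_1_commuting[OF comm, of n] C1 pot_a unfolding k by simp
  qed
  ultimately show ?thesis by simp
qed

end
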